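(* Let $(\Lambda,d)$ be a $2$-graph such that $\Lambda$ is row-finite, the blue graph $\Lambda_{\mathrm b}$ contains no cycles, and each vertex is the range of an isolated cycle lying in the red graph $\Lambda_{\mathrm r}$. Let $\lambda_1,\lambda_2$ be isolated cycles in $\Lambda_{\mathrm r}$ and let $V_1,V_2$ be the sets of vertices on $\lambda_1,\lambda_2$. (1) For every red path $\mu$ with $r(\mu)\in V_1$, the map $\sigma\mapsto\mathcal F_1(\mu,\sigma)$ is a degree-preserving bijection from $s(\mu)\Lambda_{\mathrm b}V_2$ onto $r(\mu)\Lambda_{\mathrm b}V_2$. (2) For every red path $\nu$ with $r(\nu)\in V_2$, the map $\sigma\mapsto\mathcal F_2(\sigma,\nu)$ is a degree-preserving bijection from $V_1\Lambda_{\mathrm b}r(\nu)$ onto $V_1\Lambda_{\mathrm b}s(\nu)$.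
   Context: A $2$-graph is a countable category $\Lambda$ with a functor $d:\Lambda\to\mathbb N^2$ satisfying the unique factorisation property (if $d(\lambda)=m+n$ there are unique $\mu,\nu$ with $d(\mu)=m,d(\nu)=n,\lambda=\mu\nu$). Vertices $\Lambda^0$ are the degree-$0$ paths; $r,s$ are range and source; $\mu\nu$ is defined when $s(\mu)=r(\nu)$; $\Lambda^n=d^{-1}(n)$, $e_1=(1,0)$, $e_2=(0,1)$. For sets $V,W$ of vertices and $E\subseteq\Lambda$, $VEW=\{\lambda\in E:r(\lambda)\in V,s(\lambda)\in W\}$ (with $v$ for $\{v\}$). For $0\le m\le n\le d(\lambda)$, $\lambda(m,n)$ is the unique path with $\lambda=\lambda'\lambda(m,n)\lambda''$, $d(\lambda')=m$, $d(\lambda(m,n))=n-m$, and $\lambda(n)=\lambda(n,n)$. Blue paths: degree in $\mathbb Ne_1$; red paths: degree in $\mathbb Ne_2$; $\Lambda_{\mathrm b},\Lambda_{\mathrm r}$ the sets of blue/red paths. Row-finite: $v\Lambda^n$ finite for all $v,n$. A cycle is a path $\lambda$ with $d(\lambda)\ne0$, $r(\lambda)=s(\lambda)$, $\lambda(n)\neq s(\lambda)$ for $0<n<d(\lambda)$; it is isolated if there is no $n\le d(\lambda)$ with $r(\lambda)\Lambda^n\setminus\{\lambda(0,n)\}\ne\emptyset$ and no $n\le d(\lambda)$ with $\Lambda^ns(\lambda)\setminus\{\lambda(d(\lambda)-n,d(\lambda))\}\neq\emptyset$. For $\rho,\tau$ with $s(\rho)=r(\tau)$, $\mathcal F_1(\rho,\tau):=(\rho\tau)(0,d(\tau))$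 and $\mathcal F_2(\rho,\tau):=(\rho\tau)(d(\tau),d(\rho\tau))$, so $\mathcal F_1(\rho,\tau)\mathcal F_2(\rho,\tau)=\rho\tau$. *)

theory Defs
  imports Main "HOL-Library.Countable_Set" "HOL-Library.Product_Plus" "HOL-Library.Product_Order"
begin

text \<open>A 2-graph as a small category whose morphisms (paths) form a carrier set;
objects are identified with identity morphisms, i.e. the degree-0 paths.\<close>

record 'a twograph =
  paths :: "'a set"
  rng   :: "'a \<Rightarrow> 'a"
  src   :: "'a \<Rightarrow> 'a"
  comp  :: "'a \<Rightarrow> 'a \<Rightarrow> 'a"
  deg   :: "'a \<Rightarrow> nat \<times> nat"

definition vertices :: "('a, 'b) twograph_scheme \<Rightarrow> 'a set" where
  "vertices G = {v \<in> paths G. deg G v = 0}"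

definition is_2graph :: "('a, 'b) twograph_scheme \<Rightarrow> bool" where
  "is_2graph G \<longleftrightarrow>
     countable (paths G) \<and>
     (\<forall>l\<in>paths G. rng G l \<in> vertices G \<and> src G l \<in> vertices G) \<and>
     (\<forall>v\<in>vertices G. rng G v = v \<and> src G v = v) \<and>
     (\<forall>l\<in>paths G. comp G (rng G l) l = l \<and> comp G l (src G l) = l) \<and>
     (\<forall>m\<in>paths G. \<forall>n\<in>paths G. src G m = rng G n \<longrightarrow>
         comp G m n \<in> paths G \<and> rng G (comp G m n) = rng G m \<and>
         src G (comp G m n) = src G n \<and> deg G (comp G m n) = deg G m + deg G n) \<and>
     (\<forall>a\<in>paths G. \<forall>b\<in>paths G. \<forall>c\<in>paths G. src G a = rng G b \<longrightarrow> src G b = rng G c \<longrightarrow>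
         comp G (comp G a b) c = comp G a (comp G b c)) \<and>
     (\<forall>l\<in>paths G. \<forall>m n. deg G l = m + n \<longrightarrow>
         (\<exists>!(p, q). p \<in> paths G \<and> q \<in> paths G \<and> src G p = rng G q \<and>
                    deg G p = m \<and> deg G q = n \<and> comp G p q = l))"

text \<open>The segment l(m,n) for 0 <= m <= n <= d(l).\<close>
definition seg :: "('a, 'b) twograph_scheme \<Rightarrow> 'a \<Rightarrow> nat \<times> nat \<Rightarrow> nat \<times> nat \<Rightarrow> 'a" where
  "seg G l m n = (THE p. \<exists>a b. a \<in> paths G \<and> p \<in> paths G \<and> b \<in> paths G \<and>
       src G a = rng G p \<and> src G p = rng G b \<and>
       deg G a = m \<and> deg G p = n - m \<and> l = comp G (comp G a p) b)"

definition blue :: "('a, 'b) twograph_scheme \<Rightarrow> 'a \<Rightarrow> bool" where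
  "blue G l \<longleftrightarrow> l \<in> paths G \<and> snd (deg G l) = 0"

definition red :: "('a, 'b) twograph_scheme \<Rightarrow> 'a \<Rightarrow> bool" where
  "red G l \<longleftrightarrow> l \<in> paths G \<and> fst (deg G l) = 0"

definition row_finite :: "('a, 'b) twograph_scheme \<Rightarrow> bool" where
  "row_finite G \<longleftrightarrow> (\<forall>v\<in>vertices G. \<forall>n. finite {l \<in> paths G. rng G l = v \<and> deg G l = n})"

definition is_cycle :: "('a, 'b) twograph_scheme \<Rightarrow> 'a \<Rightarrow> bool" where
  "is_cycle G l \<longleftrightarrow> l \<in> paths G \<and> deg G l \<noteq> 0 \<and> rng G l = src G l \<and>
     (\<forall>n. 0 < n \<and> n < deg G l \<longrightarrow> seg G l n n \<noteq> src G l)"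

definition isolated_cycle :: "('a, 'b) twograph_scheme \<Rightarrow> 'a \<Rightarrow> bool" where
  "isolated_cycle G l \<longleftrightarrow> is_cycle G l \<and>
     \<not> (\<exists>n \<le> deg G l. {p \<in> paths G. rng G p = rng G l \<and> deg G p = n} - {seg G l 0 n} \<noteq> {}) \<and>
     \<not> (\<exists>n \<le> deg G l. {p \<in> paths G. src G p = src G l \<and> deg G p = n}
                          - {seg G l (deg G l - n) (deg G l)} \<noteq> {})"

definition verts_on :: "('a, 'b) twograph_scheme \<Rightarrow> 'a \<Rightarrow> 'a set" where
  "verts_on G l = {seg G l n n | n. n \<le> deg G l}"

definition F1 :: "('a, 'b) twograph_scheme \<Rightarrow> 'a \<Rightarrow> 'a \<Rightarrow> 'a" where
  "F1 G p t = seg G (comp G p t) 0 (deg G t)"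

definition F2 :: "('a, 'b) twograph_scheme \<Rightarrow> 'a \<Rightarrow> 'a \<Rightarrow> 'a" where
  "F2 G p t = seg G (comp G p t) (deg G t) (deg G (comp G p t))"

end

theory Submission
  imports Defs
begin

text \<open>
  Red paths at an isolated red cycle \<open>\<lambda>\<close> must run along it: for each vertex \<open>v\<close> of \<open>\<lambda>\<close> and
  each red degree there is exactly one red path of that degree with range \<open>v\<close>, and its source
  lies on \<open>\<lambda>\<close> again. This is proved one red edge at a time: preceded by the part of \<open>\<lambda>\<close> up
  to \<open>v\<close>, an edge with range \<open>v\<close> becomes an initial segment of \<open>\<lambda>\<close>, and by isolation \<open>\<lambda>\<close>
  has only one initial segment of each degree.

  For (1) factorise \<open>\<mu>\<sigma> = \<tau>\<rho>\<close> with \<open>d(\<tau>) = d(\<sigma>)\<close>, so \<open>\<tau> = F\<^sub>1(\<mu>,\<sigma>)\<close> is blue and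
  \<open>\<rho>\<close> is red. Since \<open>\<rho>\<close> starts at \<open>s(\<sigma>) \<in> V\<^sub>2\<close> it ends in \<open>V\<^sub>2\<close>; it is the unique red path
  of its degree with range \<open>s(\<tau>)\<close>, so \<open>\<tau>\<close> determines \<open>\<rho>\<close> and, by cancellation, \<open>\<sigma>\<close>.
  Conversely, for \<open>\<tau>\<close> take the red path \<open>\<rho>\<close> along \<open>\<lambda>\<^sub>2\<close> with range \<open>s(\<tau>)\<close> and \<open>d(\<rho>) = d(\<mu>)\<close>
  and factorise \<open>\<tau>\<rho> = \<mu>'\<sigma>\<close>; uniqueness along \<open>\<lambda>\<^sub>1\<close> gives \<open>\<mu>' = \<mu>\<close>.
  Statement (2) is (1) in the opposite 2-graph, which swaps ranges and sources and turns
  \<open>F\<^sub>2\<close> into \<open>F\<^sub>1\<close>.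
\<close>

locale two_graph =
  fixes G :: "('a, 'b) twograph_scheme"
  assumes is_2graph: "is_2graph G"
begin

lemma rng_in_vertices: "l \<in> paths G \<Longrightarrow> rng G l \<in> vertices G"
  and src_in_vertices: "l \<in> paths G \<Longrightarrow> src G l \<in> vertices G"
  using is_2graph unfolding is_2graph_def by blast+

lemma rng_vertex: "v \<in> vertices G \<Longrightarrow> rng G v = v"
  and src_vertex: "v \<in> vertices G \<Longrightarrow> src G v = v"
  using is_2graph unfolding is_2graph_def by blast+

lemma vertex_iff: "v \<in> vertices G \<longleftrightarrow> v \<in> paths G \<and> deg G v = 0"
  unfolding vertices_def by blast

lemma rng_src_simps [simp]:
  assumes "l \<in> paths G"
  shows "rng G l \<in> paths G" "deg G (rng G l) = 0" "rng G (rng G l) = rng G l" "src G (rng G l) = rng G l"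
    and "src G l \<in> paths G" "deg G (src G l) = 0" "rng G (src G l) = src G l" "src G (src G l) = src G l"
  using rng_in_vertices[OF assms] src_in_vertices[OF assms] rng_vertex src_vertex
  by (auto simp: vertex_iff)

lemma comp_rng: "l \<in> paths G \<Longrightarrow> comp G (rng G l) l = l"
  and comp_src: "l \<in> paths G \<Longrightarrow> comp G l (src G l) = l"
  using is_2graph unfolding is_2graph_def by blast+

context
  fixes p q
  assumes composable: "p \<in> paths G" "q \<in> paths G" "src G p = rng G q"
begin

lemma comp_in_paths: "comp G p q \<in> paths G"
  and rng_comp: "rng G (comp G p q) = rng G p"
  and src_comp: "src G (comp G p q) = src G q"
  and deg_comp: "deg G (comp G p q) = deg G p + deg G q"
  using is_2graph composable unfolding is_2graph_def by blast+

end

lemma comp_assoc: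
  "\<lbrakk>a \<in> paths G; b \<in> paths G; c \<in> paths G; src G a = rng G b; src G b = rng G c\<rbrakk> \<Longrightarrow>
    comp G (comp G a b) c = comp G a (comp G b c)"
  using is_2graph unfolding is_2graph_def by blast

lemma unique_factorization:
  "l \<in> paths G \<Longrightarrow> deg G l = m + n \<Longrightarrow>
    \<exists>!(p, q). p \<in> paths G \<and> q \<in> paths G \<and> src G p = rng G q \<and>
              deg G p = m \<and> deg G q = n \<and> comp G p q = l"
  using is_2graph unfolding is_2graph_def by blast

lemma factorization:
  assumes "l \<in> paths G" "deg G l = m + n"
  obtains p q where "p \<in> paths G" "q \<in> paths G" "src G p = rng G q"
    "deg G p = m" "deg G q = n" "comp G p q = l"
  using unique_factorization[OF assms] by auto

lemma factorization_unique:
  assumes "p \<in> paths G" "q \<in> paths G" "src G p = rng G q"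
    and "p' \<in> paths G" "q' \<in> paths G" "src G p' = rng G q'"
    and "deg G p = deg G p'" "deg G q = deg G q'" "comp G p q = comp G p' q'"
  shows "p = p'" "q = q'"
proof -
  have "comp G p q \<in> paths G" "deg G (comp G p q) = deg G p + deg G q"
    using assms comp_in_paths deg_comp by auto
  from unique_factorization[OF this] assms have "(p, q) = (p', q')"
    by (auto simp: Ex1_def)
  then show "p = p'" "q = q'" by auto
qed

lemma cancel_left:
  "\<lbrakk>p \<in> paths G; x \<in> paths G; y \<in> paths G; src G p = rng G x; src G p = rng G y;
    deg G x = deg G y; comp G p x = comp G p y\<rbrakk> \<Longrightarrow> x = y"
  using factorization_unique(2)[of p x p y] by auto

lemma deg_zero_rng_src:
  assumes "x \<in> paths G" "deg G x = (0, 0)"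
  shows "rng G x = x" "src G x = x"
  using assms rng_vertex src_vertex by (simp_all add: vertex_iff zero_prod_def)

lemma red_path_Suc_split:
  assumes "x \<in> paths G" "deg G x = (0, Suc k)"
  obtains e x' where "e \<in> paths G" "x' \<in> paths G" "src G e = rng G x'"
    "deg G e = (0, 1)" "deg G x' = (0, k)" "comp G e x' = x"
proof -
  have "deg G x = (0, 1) + (0, k)"
    using assms(2) by simp
  with assms(1) show thesis
    using that by (rule factorization)
qed

lemma seg_eq:
  assumes "a \<in> paths G" "p \<in> paths G" "b \<in> paths G"
    and "src G a = rng G p" "src G p = rng G b"
    and "deg G a = m" "deg G p = n - m" "l = comp G (comp G a p) b"
  shows "seg G l m n = p"
  unfolding seg_def
proof (rule the_equality)
  show "\<exists>a b. a \<in> paths G \<and> p \<in> paths G \<and> b \<in> paths G \<and> src G a = rng G p \<and>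
      src G p = rng G b \<and> deg G a = m \<and> deg G p = n - m \<and> l = comp G (comp G a p) b"
    using assms by blast
next
  fix p'
  assume "\<exists>a b. a \<in> paths G \<and> p' \<in> paths G \<and> b \<in> paths G \<and> src G a = rng G p' \<and>
      src G p' = rng G b \<and> deg G a = m \<and> deg G p' = n - m \<and> l = comp G (comp G a p') b"
  then obtain a' b' where a'b': "a' \<in> paths G" "p' \<in> paths G" "b' \<in> paths G"
    "src G a' = rng G p'" "src G p' = rng G b'" "deg G a' = m" "deg G p' = n - m"
    "l = comp G (comp G a' p') b'" by blast
  have ap: "comp G a p \<in> paths G" "src G (comp G a p) = rng G b"
      "deg G l = deg G (comp G a p) + deg G b" "deg G (comp G a p) = m + (n - m)"
    using assms by (simp_all add: comp_in_paths src_comp deg_comp)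
  have ap': "comp G a' p' \<in> paths G" "src G (comp G a' p') = rng G b'"
      "deg G l = deg G (comp G a' p') + deg G b'" "deg G (comp G a' p') = m + (n - m)"
    using a'b' by (simp_all add: comp_in_paths src_comp deg_comp)
  have "comp G a p = comp G a' p'"
    using factorization_unique(1)[OF ap(1) assms(3) ap(2) ap'(1) a'b'(3) ap'(2)] ap ap' assms(8) a'b'(8)
    by simp
  then show "p' = p"
    using factorization_unique(2)[of a p a' p'] assms a'b' by simp
qed

lemma seg_prefix:
  "\<lbrakk>p \<in> paths G; q \<in> paths G; src G p = rng G q\<rbrakk> \<Longrightarrow> seg G (comp G p q) 0 (deg G p) = p"
  by (rule seg_eq[of "rng G p"]) (auto simp: comp_rng)

lemma seg_suffix:
  assumes "p \<in> paths G" "q \<in> paths G" "src G p = rng G q"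
  shows "seg G (comp G p q) (deg G p) (deg G (comp G p q)) = q"
proof (rule seg_eq)
  show "comp G p q = comp G (comp G p q) (src G q)"
    using comp_src[of "comp G p q"] assms by (simp add: comp_in_paths src_comp)
qed (use assms in \<open>simp_all add: deg_comp\<close>)

lemma seg_vertex:
  assumes "p \<in> paths G" "q \<in> paths G" "src G p = rng G q"
  shows "seg G (comp G p q) (deg G p) (deg G p) = src G p"
proof (rule seg_eq)
  show "comp G p q = comp G (comp G p (src G p)) q"
    using comp_src[of p] assms by simp
qed (use assms in simp_all)

lemma verts_on_iff:
  assumes "l \<in> paths G"
  shows "v \<in> verts_on G l \<longleftrightarrow>
    (\<exists>p q. p \<in> paths G \<and> q \<in> paths G \<and> src G p = rng G q \<and> comp G p q = l \<and> v = src G p)"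
proof
  assume "v \<in> verts_on G l"
  then obtain n where n: "n \<le> deg G l" "v = seg G l n n"
    unfolding verts_on_def by blast
  then have "deg G l = n + (deg G l - n)"
    by (simp add: prod_eq_iff less_eq_prod_def)
  with assms obtain p q where pq: "p \<in> paths G" "q \<in> paths G" "src G p = rng G q"
    "deg G p = n" "comp G p q = l"
    by (rule factorization)
  moreover have "v = src G p"
    using n seg_vertex[OF pq(1-3)] pq(4,5) by simp
  ultimately show "\<exists>p q. p \<in> paths G \<and> q \<in> paths G \<and> src G p = rng G q \<and> comp G p q = l \<and> v = src G p"
    by blast
next
  assume "\<exists>p q. p \<in> paths G \<and> q \<in> paths G \<and> src G p = rng G q \<and> comp G p q = l \<and> v = src G p"
  then obtain p q where pq: "p \<in> paths G" "q \<in> paths G" "src G p = rng G q" "comp G p q = l"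
    and v: "v = src G p" by blast
  have "deg G p \<le> deg G l"
    using deg_comp[OF pq(1-3)] pq(4) by (simp add: less_eq_prod_def)
  moreover have "v = seg G l (deg G p) (deg G p)"
    using seg_vertex[OF pq(1-3)] pq(4) v by simp
  ultimately show "v \<in> verts_on G l"
    unfolding verts_on_def by blast
qed

lemma F1_eq:
  assumes "p' \<in> paths G" "r \<in> paths G" "src G p' = rng G r"
    and "comp G p' r = comp G q t" "deg G p' = deg G t"
  shows "F1 G q t = p'"
  using seg_prefix[OF assms(1-3)] assms(4,5) unfolding F1_def by simp

lemma F1_factor:
  assumes "p \<in> paths G" "t \<in> paths G" "src G p = rng G t"
  obtains r where "F1 G p t \<in> paths G" "r \<in> paths G" "src G (F1 G p t) = rng G r"
    "deg G (F1 G p t) = deg G t" "deg G r = deg G p" "comp G (F1 G p t) r = comp G p t"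
proof -
  have "deg G (comp G p t) = deg G t + deg G p"
    using deg_comp[OF assms] by (simp add: add.commute)
  with comp_in_paths[OF assms] obtain t' r where tr: "t' \<in> paths G" "r \<in> paths G"
    "src G t' = rng G r" "deg G t' = deg G t" "deg G r = deg G p" "comp G t' r = comp G p t"
    by (rule factorization)
  moreover have "F1 G p t = t'"
    using F1_eq[OF tr(1-3)] tr(4,6) by simp
  ultimately show thesis
    using that by simp
qed

lemma F2_factor:
  assumes "p \<in> paths G" "t \<in> paths G" "src G p = rng G t"
  obtains a where "F2 G p t \<in> paths G" "a \<in> paths G" "src G a = rng G (F2 G p t)"
    "deg G (F2 G p t) = deg G p" "deg G a = deg G t" "comp G a (F2 G p t) = comp G p t"
proof -
  have "deg G (comp G p t) = deg G t + deg G p"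
    using deg_comp[OF assms] by (simp add: add.commute)
  with comp_in_paths[OF assms] obtain a t' where at: "a \<in> paths G" "t' \<in> paths G"
    "src G a = rng G t'" "deg G a = deg G t" "deg G t' = deg G p" "comp G a t' = comp G p t"
    by (rule factorization)
  moreover have "F2 G p t = t'"
    using seg_suffix[OF at(1-3)] at(4,6) unfolding F2_def by simp
  ultimately show thesis
    using that by simp
qed

end

definition opposite :: "('a, 'b) twograph_scheme \<Rightarrow> ('a, 'b) twograph_scheme" where
  "opposite G = G\<lparr>rng := src G, src := rng G, comp := \<lambda>p q. comp G q p\<rparr>"

lemma opposite_simps [simp]:
  "paths (opposite G) = paths G" "deg (opposite G) = deg G"
  "rng (opposite G) = src G" "src (opposite G) = rng G" "comp (opposite G) p q = comp G q p"
  by (simp_all add: opposite_def)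

lemma vertices_opposite [simp]: "vertices (opposite G) = vertices G"
  and blue_opposite [simp]: "blue (opposite G) = blue G"
  and red_opposite [simp]: "red (opposite G) = red G"
  by (simp_all add: vertices_def blue_def[abs_def] red_def[abs_def])

lemma (in two_graph) two_graph_opposite: "two_graph (opposite G)"
proof -
  have factorization_opposite:
    "\<exists>!(p, q). p \<in> paths G \<and> q \<in> paths G \<and> rng G p = src G q \<and>
        deg G p = m \<and> deg G q = n \<and> comp G q p = l"
    if "l \<in> paths G" "deg G l = m + n" for l m n
  proof -
    have "deg G l = n + m"
      using that(2) by (simp add: add.commute)
    with that(1) obtain q p where qp: "q \<in> paths G" "p \<in> paths G" "src G q = rng G p"
      "deg G q = n" "deg G p = m" "comp G q p = l"
      by (rule factorization)
    show ?thesis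
    proof (rule ex1I[of _ "(p, q)"])
      fix x
      assume x: "case x of (p', q') \<Rightarrow> p' \<in> paths G \<and> q' \<in> paths G \<and> rng G p' = src G q' \<and>
          deg G p' = m \<and> deg G q' = n \<and> comp G q' p' = l"
      obtain p' q' where x_eq: "x = (p', q')"
        by (cases x)
      with x have p'q': "p' \<in> paths G" "q' \<in> paths G" "rng G p' = src G q'"
        "deg G p' = m" "deg G q' = n" "comp G q' p' = l"
        by simp_all
      have "q = q'" "p = p'"
        using factorization_unique[OF qp(1-3) p'q'(2,1) p'q'(3)[symmetric]] qp p'q' by simp_all
      with x_eq show "x = (p, q)"
        by simp
    qed (use qp in simp)
  qed
  show ?thesis
    unfolding two_graph_def is_2graph_def opposite_simps vertices_opposite
  proof (intro conjI ballI allI impI)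
    show "countable (paths G)"
      using is_2graph unfolding is_2graph_def by blast
  next
    fix p q
    assume "p \<in> paths G" "q \<in> paths G" "rng G p = src G q"
    then show "comp G q p \<in> paths G" "src G (comp G q p) = src G p" "rng G (comp G q p) = rng G q"
      "deg G (comp G q p) = deg G p + deg G q"
      by (simp_all add: comp_in_paths src_comp rng_comp deg_comp add.commute)
  next
    fix a b c
    assume "a \<in> paths G" "b \<in> paths G" "c \<in> paths G" "rng G a = src G b" "rng G b = src G c"
    then show "comp G c (comp G b a) = comp G (comp G c b) a"
      by (simp add: comp_assoc)
  qed (simp_all add: src_in_vertices rng_in_vertices src_vertex rng_vertex comp_src comp_rng
         factorization_opposite)
qed

context two_graph
begin

lemma verts_on_opposite:
  assumes "l \<in> paths G"
  shows "verts_on (opposite G) l = verts_on G l"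
proof -
  interpret op: two_graph "opposite G"
    by (rule two_graph_opposite)
  have "v \<in> verts_on (opposite G) l \<longleftrightarrow>
      (\<exists>q p. q \<in> paths G \<and> p \<in> paths G \<and> rng G q = src G p \<and> comp G p q = l \<and> v = rng G q)" for v
    using op.verts_on_iff[of l v] assms by simp
  then show ?thesis
    using verts_on_iff[OF assms] by (metis (no_types, lifting) set_eqI)
qed

lemma F1_opposite:
  assumes "p \<in> paths G" "t \<in> paths G" "src G p = rng G t"
  shows "F1 (opposite G) t p = F2 G p t"
proof -
  interpret op: two_graph "opposite G"
    by (rule two_graph_opposite)
  obtain a where "F2 G p t \<in> paths G" "a \<in> paths G" "src G a = rng G (F2 G p t)"
    "deg G (F2 G p t) = deg G p" "comp G a (F2 G p t) = comp G p t"
    using F2_factor[OF assms] by blast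
  then show ?thesis
    by (intro op.F1_eq[of _ a]) simp_all
qed

end

text \<open>Isolation of a cycle is used only through the uniqueness of its prefixes and suffixes,
  a formulation that is invariant under passing to the opposite 2-graph.\<close>

locale isolated_red_cycle = two_graph +
  fixes l :: 'a
  assumes red_cycle: "red G l"
    and deg_cycle_nonzero: "deg G l \<noteq> 0"
    and rng_cycle_eq_src: "rng G l = src G l"
    and prefix_unique: "\<lbrakk>x \<in> paths G; y \<in> paths G; rng G x = rng G l; rng G y = rng G l;
      deg G x = deg G y; deg G x \<le> deg G l\<rbrakk> \<Longrightarrow> x = y"
    and suffix_unique: "\<lbrakk>x \<in> paths G; y \<in> paths G; src G x = src G l; src G y = src G l;
      deg G x = deg G y; deg G x \<le> deg G l\<rbrakk> \<Longrightarrow> x = y"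

lemma isolated_red_cycleI:
  assumes "is_2graph G" "isolated_cycle G l" "red G l"
  shows "isolated_red_cycle G l"
proof -
  have prefix: "x = seg G l 0 (deg G x)"
    if "x \<in> paths G" "rng G x = rng G l" "deg G x \<le> deg G l" for x
    using assms(2) that unfolding isolated_cycle_def by blast
  have suffix: "x = seg G l (deg G l - deg G x) (deg G l)"
    if "x \<in> paths G" "src G x = src G l" "deg G x \<le> deg G l" for x
    using assms(2) that unfolding isolated_cycle_def by blast
  show ?thesis
  proof (unfold_locales)
    fix x y
    assume "x \<in> paths G" "y \<in> paths G" "rng G x = rng G l" "rng G y = rng G l"
      "deg G x = deg G y" "deg G x \<le> deg G l"
    then show "x = y"
      using prefix[of x] prefix[of y] by simp
  next
    fix x y
    assume "x \<in> paths G" "y \<in> paths G" "src G x = src G l" "src G y = src G l"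
      "deg G x = deg G y" "deg G x \<le> deg G l"
    then show "x = y"
      using suffix[of x] suffix[of y] by simp
  qed (use assms in \<open>auto simp: isolated_cycle_def is_cycle_def\<close>)
qed

lemma isolated_red_cycle_opposite:
  assumes "isolated_red_cycle G l"
  shows "isolated_red_cycle (opposite G) l"
proof -
  interpret isolated_red_cycle G l
    by (fact assms)
  show ?thesis
    unfolding isolated_red_cycle_def isolated_red_cycle_axioms_def
    using two_graph_opposite red_cycle deg_cycle_nonzero rng_cycle_eq_src prefix_unique suffix_unique
    by simp
qed

context isolated_red_cycle
begin

lemma cycle_in_paths: "l \<in> paths G"
  using red_cycle unfolding red_def by blast

lemma verts_on_vertex:
  assumes "v \<in> verts_on G l"
  shows "v \<in> paths G" "rng G v = v" "deg G v = (0, 0)"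
proof -
  obtain p where "p \<in> paths G" "v = src G p"
    using assms verts_on_iff[OF cycle_in_paths] by blast
  then show "v \<in> paths G" "rng G v = v" "deg G v = (0, 0)"
    by (simp_all add: zero_prod_def)
qed

lemma src_prefix_in_verts_on:
  assumes "x \<in> paths G" "rng G x = rng G l" "deg G x \<le> deg G l"
  shows "src G x \<in> verts_on G l"
proof -
  have "deg G l = deg G x + (deg G l - deg G x)"
    using assms(3) by (simp add: prod_eq_iff less_eq_prod_def)
  with cycle_in_paths obtain p q where pq: "p \<in> paths G" "q \<in> paths G" "src G p = rng G q"
    "deg G p = deg G x" "comp G p q = l"
    by (rule factorization)
  moreover have "rng G p = rng G l"
    using rng_comp[OF pq(1-3)] pq(5) by simp
  ultimately have "p = x"
    using assms prefix_unique[of p x] by simp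
  with pq show ?thesis
    using verts_on_iff[OF cycle_in_paths] by blast
qed

lemma verts_on_split:
  assumes "v \<in> verts_on G l"
  obtains a b where "a \<in> paths G" "b \<in> paths G" "src G a = rng G b" "comp G a b = l"
    "src G a = v" "deg G b \<noteq> 0"
proof -
  obtain a b where ab: "a \<in> paths G" "b \<in> paths G" "src G a = rng G b" "comp G a b = l"
    "src G a = v"
    using assms unfolding verts_on_iff[OF cycle_in_paths] by auto
  show thesis
  proof (cases "deg G b = 0")
    case True
    with ab(2) have "b \<in> vertices G"
      by (simp add: vertex_iff)
    then have "b = src G a"
      using rng_vertex ab(3) by simp
    then have "a = l"
      using comp_src[OF ab(1)] ab(4) by simp
    then have "v = rng G l"
      using ab(5) rng_cycle_eq_src by simp
    then show thesis
      using that[of "rng G l" l] cycle_in_paths comp_rng deg_cycle_nonzero by simp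
  next
    case False
    with ab show thesis
      by (rule that)
  qed
qed

lemma red_edge_into_verts_on:
  assumes "v \<in> verts_on G l"
  shows ex_red_edge_into_verts_on: "\<exists>e. e \<in> paths G \<and> rng G e = v \<and> deg G e = (0, 1)"
    and src_red_edge_into_verts_on:
      "\<lbrakk>e \<in> paths G; rng G e = v; deg G e = (0, 1)\<rbrakk> \<Longrightarrow> src G e \<in> verts_on G l"
    and red_edge_into_verts_on_unique:
      "\<lbrakk>e \<in> paths G; e' \<in> paths G; rng G e = v; rng G e' = v; deg G e = (0, 1); deg G e' = (0, 1)\<rbrakk>
        \<Longrightarrow> e = e'"
proof -
  obtain a b where ab: "a \<in> paths G" "b \<in> paths G" "src G a = rng G b" "comp G a b = l"
    "src G a = v" "deg G b \<noteq> 0"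
    using assms by (rule verts_on_split)
  have deg_l: "deg G l = deg G a + deg G b"
    using ab deg_comp by metis
  have rng_a: "rng G a = rng G l"
    using ab rng_comp by metis
  have fst_deg: "fst (deg G a) = 0" "fst (deg G b) = 0"
    using red_cycle deg_l unfolding red_def by simp_all
  have extend: "comp G a e \<in> paths G" "rng G (comp G a e) = rng G l" "deg G (comp G a e) \<le> deg G l"
    if "e \<in> paths G" "rng G e = v" "deg G e = (0, 1)" for e
    using that ab rng_a deg_l fst_deg comp_in_paths[of a e] rng_comp[of a e] deg_comp[of a e]
    by (auto simp: less_eq_prod_def prod_eq_iff)
  have "deg G b = (0, 1) + (deg G b - (0, 1))"
    using fst_deg ab(6) by (simp add: prod_eq_iff)
  with ab(2) obtain e b' where "e \<in> paths G" "b' \<in> paths G" "src G e = rng G b'"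
    "deg G e = (0, 1)" "comp G e b' = b"
    by (rule factorization)
  then show "\<exists>e. e \<in> paths G \<and> rng G e = v \<and> deg G e = (0, 1)"
    using ab rng_comp by metis
  show "src G e \<in> verts_on G l" if "e \<in> paths G" "rng G e = v" "deg G e = (0, 1)" for e
    using src_prefix_in_verts_on[OF extend[OF that]] src_comp[of a e] that ab by simp
  show "e = e'" if "e \<in> paths G" "e' \<in> paths G" "rng G e = v" "rng G e' = v"
    "deg G e = (0, 1)" "deg G e' = (0, 1)" for e e'
  proof -
    have "comp G a e = comp G a e'"
      using extend[of e] extend[of e'] that ab deg_comp[of a e] deg_comp[of a e']
        prefix_unique[of "comp G a e" "comp G a e'"]
      by simp
    then show ?thesis
      using that ab cancel_left[of a e e'] by simp
  qed
qed

lemma ex_red_path_into_verts_on: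
  "v \<in> verts_on G l \<Longrightarrow> \<exists>x. x \<in> paths G \<and> rng G x = v \<and> deg G x = (0, k)"
proof (induction k arbitrary: v)
  case 0
  then show ?case
    using verts_on_vertex by blast
next
  case (Suc k)
  then obtain e where e: "e \<in> paths G" "rng G e = v" "deg G e = (0, 1)"
    using ex_red_edge_into_verts_on by blast
  then have "src G e \<in> verts_on G l"
    using Suc.prems src_red_edge_into_verts_on by blast
  then obtain x where x: "x \<in> paths G" "rng G x = src G e" "deg G x = (0, k)"
    using Suc.IH by blast
  then have "comp G e x \<in> paths G \<and> rng G (comp G e x) = v \<and> deg G (comp G e x) = (0, Suc k)"
    using e comp_in_paths rng_comp deg_comp by simp
  then show ?case
    by blast
qed

lemma src_red_path_into_verts_on:
  "\<lbrakk>x \<in> paths G; rng G x \<in> verts_on G l; deg G x = (0, k)\<rbrakk> \<Longrightarrow> src G x \<in> verts_on G l"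
proof (induction k arbitrary: x)
  case 0
  then show ?case
    using deg_zero_rng_src by simp
next
  case (Suc k)
  obtain e x' where ex': "e \<in> paths G" "x' \<in> paths G" "src G e = rng G x'"
    "deg G e = (0, 1)" "deg G x' = (0, k)" "comp G e x' = x"
    using red_path_Suc_split[OF Suc.prems(1,3)] .
  then have "rng G e = rng G x"
    using rng_comp by metis
  then have "src G e \<in> verts_on G l"
    using Suc.prems(2) ex' src_red_edge_into_verts_on[of "rng G x" e] by simp
  then have "src G x' \<in> verts_on G l"
    using Suc.IH ex' by simp
  then show ?case
    using ex' src_comp by metis
qed

lemma red_path_into_verts_on_unique:
  "\<lbrakk>x \<in> paths G; y \<in> paths G; rng G x = rng G y; rng G x \<in> verts_on G l;
    deg G x = (0, k); deg G y = (0, k)\<rbrakk> \<Longrightarrow> x = y"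
proof (induction k arbitrary: x y)
  case 0
  then show ?case
    using deg_zero_rng_src by metis
next
  case (Suc k)
  obtain e x' where ex': "e \<in> paths G" "x' \<in> paths G" "src G e = rng G x'"
    "deg G e = (0, 1)" "deg G x' = (0, k)" "comp G e x' = x"
    using red_path_Suc_split[OF Suc.prems(1,5)] .
  obtain f y' where fy': "f \<in> paths G" "y' \<in> paths G" "src G f = rng G y'"
    "deg G f = (0, 1)" "deg G y' = (0, k)" "comp G f y' = y"
    using red_path_Suc_split[OF Suc.prems(2,6)] .
  have "rng G e = rng G x" "rng G f = rng G y"
    using ex' fy' rng_comp by metis+
  then have "e = f" "src G e \<in> verts_on G l"
    using Suc.prems(3,4) ex' fy' red_edge_into_verts_on_unique[of "rng G x" e f]
      src_red_edge_into_verts_on[of "rng G x" e]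
    by simp_all
  then have "x' = y'"
    using Suc.IH[of x' y'] ex' fy' by simp
  then show ?case
    using \<open>e = f\<close> ex' fy' by simp
qed

lemma rng_red_path_from_verts_on:
  "\<lbrakk>x \<in> paths G; src G x \<in> verts_on G l; deg G x = (0, k)\<rbrakk> \<Longrightarrow> rng G x \<in> verts_on G l"
proof -
  interpret op: isolated_red_cycle "opposite G" l
    using isolated_red_cycle_axioms by (rule isolated_red_cycle_opposite)
  show "\<lbrakk>x \<in> paths G; src G x \<in> verts_on G l; deg G x = (0, k)\<rbrakk> \<Longrightarrow> ?thesis"
    using op.src_red_path_into_verts_on[of x k] verts_on_opposite[OF cycle_in_paths] by simp
qed

end

context two_graph
begin

lemma red_pathD: "red G m \<Longrightarrow> m \<in> paths G \<and> deg G m = (0, snd (deg G m))"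
  unfolding red_def by (simp add: prod_eq_iff)

lemma F1_blue_src_on_cycle:
  assumes "isolated_red_cycle G l" "red G m"
    and "blue G s" "rng G s = src G m" "src G s \<in> verts_on G l"
  shows "blue G (F1 G m s) \<and> rng G (F1 G m s) = rng G m \<and> src G (F1 G m s) \<in> verts_on G l"
proof -
  interpret isolated_red_cycle G l by fact
  obtain k where m: "m \<in> paths G" "deg G m = (0, k)"
    using red_pathD[OF assms(2)] by blast
  have s: "s \<in> paths G" "snd (deg G s) = 0"
    using assms(3) unfolding blue_def by simp_all
  obtain r where r: "F1 G m s \<in> paths G" "r \<in> paths G" "src G (F1 G m s) = rng G r"
    "deg G (F1 G m s) = deg G s" "deg G r = deg G m" "comp G (F1 G m s) r = comp G m s"
    using F1_factor[OF m(1) s(1) assms(4)[symmetric]] by blast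
  have ends: "rng G (F1 G m s) = rng G m" "src G r = src G s"
    using rng_comp[OF r(1-3)] src_comp[OF r(1-3)] r(6) rng_comp[of m s] src_comp[of m s] m s assms(4)
    by simp_all
  then have "rng G r \<in> verts_on G l"
    using rng_red_path_from_verts_on[of r k] r m assms(5) by simp
  with ends show ?thesis
    using r(1,3,4) s(2) unfolding blue_def by simp
qed

lemma inj_on_F1:
  assumes "isolated_red_cycle G l" "red G m"
  shows "inj_on (F1 G m) {s. blue G s \<and> rng G s = src G m \<and> src G s \<in> verts_on G l}"
proof (rule inj_onI)
  interpret isolated_red_cycle G l by fact
  obtain k where m: "m \<in> paths G" "deg G m = (0, k)"
    using red_pathD[OF assms(2)] by blast
  fix s s'
  assume s: "s \<in> {s. blue G s \<and> rng G s = src G m \<and> src G s \<in> verts_on G l}"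
    and s': "s' \<in> {s. blue G s \<and> rng G s = src G m \<and> src G s \<in> verts_on G l}"
    and eq: "F1 G m s = F1 G m s'"
  have composable: "s \<in> paths G" "src G m = rng G s" "s' \<in> paths G" "src G m = rng G s'"
    using s s' unfolding blue_def by simp_all
  obtain r where r: "F1 G m s \<in> paths G" "r \<in> paths G" "src G (F1 G m s) = rng G r"
    "deg G (F1 G m s) = deg G s" "deg G r = deg G m" "comp G (F1 G m s) r = comp G m s"
    using F1_factor[OF m(1) composable(1,2)] by blast
  obtain r' where r': "F1 G m s' \<in> paths G" "r' \<in> paths G" "src G (F1 G m s') = rng G r'"
    "deg G (F1 G m s') = deg G s'" "deg G r' = deg G m" "comp G (F1 G m s') r' = comp G m s'"
    using F1_factor[OF m(1) composable(3,4)] by blast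
  have "src G (F1 G m s) \<in> verts_on G l"
    using F1_blue_src_on_cycle[OF assms] s by simp
  then have "r = r'"
    using red_path_into_verts_on_unique[of r r' k] r r' m eq by simp
  then have "comp G m s = comp G m s'"
    using r(6) r'(6) eq by simp
  then show "s = s'"
    using cancel_left[of m s s'] composable m r(4) r'(4) eq by simp
qed

lemma mem_F1_image:
  assumes "isolated_red_cycle G l1" "isolated_red_cycle G l2"
    and "red G m" "rng G m \<in> verts_on G l1"
    and "blue G t" "rng G t = rng G m" "src G t \<in> verts_on G l2"
  shows "t \<in> F1 G m ` {s. blue G s \<and> rng G s = src G m \<and> src G s \<in> verts_on G l2}"
proof -
  interpret c1: isolated_red_cycle G l1 by fact
  interpret c2: isolated_red_cycle G l2 by fact
  obtain k where m: "m \<in> paths G" "deg G m = (0, k)"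
    using red_pathD[OF assms(3)] by blast
  have t: "t \<in> paths G" "snd (deg G t) = 0"
    using assms(5) unfolding blue_def by simp_all
  obtain r where r: "r \<in> paths G" "rng G r = src G t" "deg G r = (0, k)"
    using c2.ex_red_path_into_verts_on[OF assms(7)] by blast
  have "deg G (comp G t r) = (0, k) + deg G t"
    using deg_comp[of t r] t r by (simp add: add.commute)
  with comp_in_paths[of t r] t r obtain m' s where ms: "m' \<in> paths G" "s \<in> paths G"
    "src G m' = rng G s" "deg G m' = (0, k)" "deg G s = deg G t" "comp G m' s = comp G t r"
    by (metis factorization)
  have ends: "rng G m' = rng G m" "src G s = src G r"
    using rng_comp[of m' s] src_comp[of m' s] rng_comp[of t r] src_comp[of t r] ms t r assms(6)
    by simp_all
  then have "m' = m"
    using c1.red_path_into_verts_on_unique[of m' m k] ms m assms(4) by simp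
  moreover have "src G r \<in> verts_on G l2"
    using c2.src_red_path_into_verts_on[of r k] r assms(7) by simp
  ultimately have "blue G s \<and> rng G s = src G m \<and> src G s \<in> verts_on G l2"
    using ms t ends unfolding blue_def by simp
  moreover have "F1 G m s = t"
    using F1_eq[of t r m s] ms t r \<open>m' = m\<close> by simp
  ultimately show ?thesis
    by blast
qed

lemma bij_betw_F1:
  assumes "isolated_red_cycle G l1" "isolated_red_cycle G l2"
    and "red G m" "rng G m \<in> verts_on G l1"
  shows "bij_betw (F1 G m)
    {s. blue G s \<and> rng G s = src G m \<and> src G s \<in> verts_on G l2}
    {s. blue G s \<and> rng G s = rng G m \<and> src G s \<in> verts_on G l2}"
  unfolding bij_betw_def
proof
  show "inj_on (F1 G m) {s. blue G s \<and> rng G s = src G m \<and> src G s \<in> verts_on G l2}"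
    using inj_on_F1[OF assms(2,3)] .
  show "F1 G m ` {s. blue G s \<and> rng G s = src G m \<and> src G s \<in> verts_on G l2} =
      {s. blue G s \<and> rng G s = rng G m \<and> src G s \<in> verts_on G l2}"
    using F1_blue_src_on_cycle[OF assms(2,3)] mem_F1_image[OF assms] by blast
qed

lemma bij_betw_F2:
  assumes "isolated_red_cycle G l1" "isolated_red_cycle G l2"
    and "red G n" "rng G n \<in> verts_on G l2"
  shows "bij_betw (\<lambda>s. F2 G s n)
    {s. blue G s \<and> rng G s \<in> verts_on G l1 \<and> src G s = rng G n}
    {s. blue G s \<and> rng G s \<in> verts_on G l1 \<and> src G s = src G n}"
proof -
  interpret op: two_graph "opposite G"
    by (rule two_graph_opposite)
  interpret c1: isolated_red_cycle G l1 by fact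
  interpret c2: isolated_red_cycle G l2 by fact
  obtain k where n: "n \<in> paths G" "deg G n = (0, k)"
    using red_pathD[OF assms(3)] by blast
  then have "src G n \<in> verts_on G l2"
    using c2.src_red_path_into_verts_on assms(4) by blast
  have domain: "{s. blue G s \<and> rng G s \<in> verts_on G l1 \<and> src G s = rng G n} =
      {s. blue G s \<and> src G s = rng G n \<and> rng G s \<in> verts_on G l1}"
    and codomain: "{s. blue G s \<and> rng G s \<in> verts_on G l1 \<and> src G s = src G n} =
      {s. blue G s \<and> src G s = src G n \<and> rng G s \<in> verts_on G l1}"
    by blast+
  have "bij_betw (F1 (opposite G) n)
      {s. blue G s \<and> src G s = rng G n \<and> rng G s \<in> verts_on G l1}
      {s. blue G s \<and> src G s = src G n \<and> rng G s \<in> verts_on G l1}"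
    using op.bij_betw_F1[OF isolated_red_cycle_opposite[OF assms(2)]
        isolated_red_cycle_opposite[OF assms(1)], of n] assms(3) \<open>src G n \<in> verts_on G l2\<close>
      verts_on_opposite[OF c1.cycle_in_paths] verts_on_opposite[OF c2.cycle_in_paths]
    by simp
  moreover have "bij_betw (\<lambda>s. F2 G s n)
      {s. blue G s \<and> src G s = rng G n \<and> rng G s \<in> verts_on G l1} B \<longleftrightarrow>
    bij_betw (F1 (opposite G) n)
      {s. blue G s \<and> src G s = rng G n \<and> rng G s \<in> verts_on G l1} B" for B
  proof (rule bij_betw_cong)
    fix s
    assume "s \<in> {s. blue G s \<and> src G s = rng G n \<and> rng G s \<in> verts_on G l1}"
    then show "F2 G s n = F1 (opposite G) n s"
      using F1_opposite[of s n] n unfolding blue_def by simp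
  qed
  ultimately show ?thesis
    unfolding domain codomain by simp
qed

lemma deg_F1: "\<lbrakk>p \<in> paths G; t \<in> paths G; src G p = rng G t\<rbrakk> \<Longrightarrow> deg G (F1 G p t) = deg G t"
  by (rule F1_factor) simp_all

lemma deg_F2: "\<lbrakk>p \<in> paths G; t \<in> paths G; src G p = rng G t\<rbrakk> \<Longrightarrow> deg G (F2 G p t) = deg G p"
  by (rule F2_factor) simp_all

end

theorem lemma3p3:
  fixes G :: "('a, 'b) twograph_scheme" and l1 l2 :: 'a
  assumes "is_2graph G"
    and "row_finite G"
    and "\<forall>l. is_cycle G l \<longrightarrow> \<not> blue G l"
    and "\<forall>v\<in>vertices G. \<exists>l. isolated_cycle G l \<and> red G l \<and> rng G l = v"
    and "isolated_cycle G l1" and "red G l1"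
    and "isolated_cycle G l2" and "red G l2"
  shows "(\<forall>m. red G m \<and> rng G m \<in> verts_on G l1 \<longrightarrow>
            bij_betw (\<lambda>s. F1 G m s)
              {s. blue G s \<and> rng G s = src G m \<and> src G s \<in> verts_on G l2}
              {s. blue G s \<and> rng G s = rng G m \<and> src G s \<in> verts_on G l2} \<and>
            (\<forall>s. blue G s \<and> rng G s = src G m \<and> src G s \<in> verts_on G l2 \<longrightarrow>
                 deg G (F1 G m s) = deg G s))
       \<and> (\<forall>n. red G n \<and> rng G n \<in> verts_on G l2 \<longrightarrow>
            bij_betw (\<lambda>s. F2 G s n)
              {s. blue G s \<and> rng G s \<in> verts_on G l1 \<and> src G s = rng G n}
              {s. blue G s \<and> rng G s \<in> verts_on G l1 \<and> src G s = src G n} \<and>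
            (\<forall>s. blue G s \<and> rng G s \<in> verts_on G l1 \<and> src G s = rng G n \<longrightarrow>
                 deg G (F2 G s n) = deg G s))"
proof -
  interpret two_graph G
    by (fact two_graph.intro[OF assms(1)])
  have cycles: "isolated_red_cycle G l1" "isolated_red_cycle G l2"
    using isolated_red_cycleI[OF assms(1,5,6)] isolated_red_cycleI[OF assms(1,7,8)] .
  have "deg G (F1 G m s) = deg G s" if "red G m" "blue G s" "rng G s = src G m" for m s
    using deg_F1[of m s] that unfolding red_def blue_def by simp
  moreover have "deg G (F2 G s n) = deg G s" if "red G n" "blue G s" "src G s = rng G n" for s n
    using deg_F2[of s n] that unfolding red_def blue_def by simp
  ultimately show ?thesis
    using bij_betw_F1[OF cycles] bij_betw_F2[OF cycles] by blast
qed

end
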